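(* Let $P$ be a poset and let $C_2$ denote the 2-chain. If two elements of $P$ are $(C_2, 2, k)$-symmetric, then $k \in \{0, 1\}$.
   Context: The 2-chain $C_2$ is the poset $\{x<y\}$. For a poset $X$, $\ell(X)$ is the cardinality of a longest chain in $X$. A subset $A$ of a poset $X$ is maximally ordered in $X$ if $|\{(a,b)\in A\times A : a<b\}|$ is maximal among all subsets of $X$ of cardinality $|A|$. For $\sigma\in\mathrm{Aut}(P)$ let $\Sigma(\sigma)=\{a\in P:\sigma(a)\ne a\}$. For a finite poset $Q$ and integer $r\ge2$: $\sigma\in\mathrm{Aut}(P)$ is a $(Q,r)$-generator if there exist subsets $S_0,\dots,S_{r-1}\subset\Sigma(\sigma)$, each isomorphic to $Q$, which are smallest maximally ordered subsets of $\Sigma(\sigma)$ with $\sigma(S_i)=S_{(i+1)\bmod r}$, $\ell(S_i)=\ell(\Sigma(\sigma))$ for all $i$, and $\bigcup_i S_i=\Sigma(\sigma)$; any two distinct $S_i,S_j$ are $(Q,r)$-symmetric subsets. Elements $a,b\in P$ are $(Q,r,0)$-symmetric if $a=b$; $(Q,r,1)$-symmetric if there are $(Q,r)$-symmetric subsets $A,B$ with $(Q,r)$-generator $\sigma$ such that $a\in A$ and $b=\sigma^q(a)\in B$ for some $1\le q<r$; for $n\ge2$, $(Q,r,n)$-symmetric if they are not $(Q,r,j)$-symmetric for any $j<n$ but there exist $c\in P$ and $j<n$ with $a$ $(Q,r,j)$-symmetric to $c$ and $c$ $(Q,r,n-j)$-symmetric to $b$. *)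

theory Defs
  imports Main
begin

definition poset :: "'a set \<Rightarrow> ('a \<Rightarrow> 'a \<Rightarrow> bool) \<Rightarrow> bool" where
  "poset P le \<longleftrightarrow>
     (\<forall>a\<in>P. le a a) \<and>
     (\<forall>a\<in>P. \<forall>b\<in>P. le a b \<and> le b a \<longrightarrow> a = b) \<and>
     (\<forall>a\<in>P. \<forall>b\<in>P. \<forall>c\<in>P. le a b \<and> le b c \<longrightarrow> le a c)"

definition strict :: "('a \<Rightarrow> 'a \<Rightarrow> bool) \<Rightarrow> 'a \<Rightarrow> 'a \<Rightarrow> bool" where
  "strict le a b \<longleftrightarrow> le a b \<and> a \<noteq> b"

definition is_aut :: "'a set \<Rightarrow> ('a \<Rightarrow> 'a \<Rightarrow> bool) \<Rightarrow> ('a \<Rightarrow> 'a) \<Rightarrow> bool" where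
  "is_aut P le \<sigma> \<longleftrightarrow> bij_betw \<sigma> P P \<and> (\<forall>a\<in>P. \<forall>b\<in>P. le a b \<longleftrightarrow> le (\<sigma> a) (\<sigma> b))"

definition supp :: "'a set \<Rightarrow> ('a \<Rightarrow> 'a) \<Rightarrow> 'a set" where
  "supp P \<sigma> = {a \<in> P. \<sigma> a \<noteq> a}"

definition is_chain :: "('a \<Rightarrow> 'a \<Rightarrow> bool) \<Rightarrow> 'a set \<Rightarrow> bool" where
  "is_chain le C \<longleftrightarrow> (\<forall>a\<in>C. \<forall>b\<in>C. le a b \<or> le b a)"

definition chain_len :: "('a \<Rightarrow> 'a \<Rightarrow> bool) \<Rightarrow> 'a set \<Rightarrow> nat" where
  "chain_len le X = Max {card C | C. C \<subseteq> X \<and> is_chain le C}"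

definition n_ordered :: "('a \<Rightarrow> 'a \<Rightarrow> bool) \<Rightarrow> 'a set \<Rightarrow> nat" where
  "n_ordered le A = card {(a, b). a \<in> A \<and> b \<in> A \<and> strict le a b}"

definition max_ordered :: "('a \<Rightarrow> 'a \<Rightarrow> bool) \<Rightarrow> 'a set \<Rightarrow> 'a set \<Rightarrow> bool" where
  "max_ordered le X A \<longleftrightarrow> A \<subseteq> X \<and>
     (\<forall>B. B \<subseteq> X \<and> card B = card A \<longrightarrow> n_ordered le B \<le> n_ordered le A)"

definition order_iso :: "'a set \<Rightarrow> ('a \<Rightarrow> 'a \<Rightarrow> bool) \<Rightarrow> 'q set \<Rightarrow> ('q \<Rightarrow> 'q \<Rightarrow> bool) \<Rightarrow> bool" where
  "order_iso S le Q leQ \<longleftrightarrow>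
     (\<exists>f. bij_betw f S Q \<and> (\<forall>a\<in>S. \<forall>b\<in>S. le a b \<longleftrightarrow> leQ (f a) (f b)))"

text \<open>sigma is a (Q,r)-generator witnessed by the family S 0, ..., S (r-1).
  "Smallest maximally ordered subsets" is read as: maximally ordered in Sigma(sigma),
  with longest chain of length l(Sigma(sigma)), and of minimum cardinality among all
  maximally ordered subsets of Sigma(sigma) with that chain length.\<close>
definition generator_family ::
  "'a set \<Rightarrow> ('a \<Rightarrow> 'a \<Rightarrow> bool) \<Rightarrow> 'q set \<Rightarrow> ('q \<Rightarrow> 'q \<Rightarrow> bool) \<Rightarrow> nat \<Rightarrow>
   ('a \<Rightarrow> 'a) \<Rightarrow> (nat \<Rightarrow> 'a set) \<Rightarrow> bool" where
  "generator_family P le Q leQ r \<sigma> S \<longleftrightarrow>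
     is_aut P le \<sigma> \<and>
     (\<forall>i<r. S i \<subseteq> supp P \<sigma> \<and>
            order_iso (S i) le Q leQ \<and>
            max_ordered le (supp P \<sigma>) (S i) \<and>
            chain_len le (S i) = chain_len le (supp P \<sigma>) \<and>
            (\<forall>T. max_ordered le (supp P \<sigma>) T \<and> chain_len le T = chain_len le (supp P \<sigma>)
                 \<longrightarrow> card (S i) \<le> card T) \<and>
            \<sigma> ` (S i) = S ((i + 1) mod r)) \<and>
     (\<Union>i<r. S i) = supp P \<sigma>"

definition is_generator ::
  "'a set \<Rightarrow> ('a \<Rightarrow> 'a \<Rightarrow> bool) \<Rightarrow> 'q set \<Rightarrow> ('q \<Rightarrow> 'q \<Rightarrow> bool) \<Rightarrow> nat \<Rightarrow> ('a \<Rightarrow> 'a) \<Rightarrow> bool" where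
  "is_generator P le Q leQ r \<sigma> \<longleftrightarrow> (\<exists>S. generator_family P le Q leQ r \<sigma> S)"

definition sym1 ::
  "'a set \<Rightarrow> ('a \<Rightarrow> 'a \<Rightarrow> bool) \<Rightarrow> 'q set \<Rightarrow> ('q \<Rightarrow> 'q \<Rightarrow> bool) \<Rightarrow> nat \<Rightarrow> 'a \<Rightarrow> 'a \<Rightarrow> bool" where
  "sym1 P le Q leQ r a b \<longleftrightarrow>
     (\<exists>\<sigma> S i j q. generator_family P le Q leQ r \<sigma> S \<and> i < r \<and> j < r \<and> S i \<noteq> S j \<and>
        a \<in> S i \<and> 1 \<le> q \<and> q < r \<and> b = (\<sigma> ^^ q) a \<and> b \<in> S j)"

text \<open>(Q,r,n)-symmetry. In the clause for n >= 2 the intermediate index j is taken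
  with 0 < j < n; the case j = 0 would only restate the defined relation itself.\<close>
function symk ::
  "'a set \<Rightarrow> ('a \<Rightarrow> 'a \<Rightarrow> bool) \<Rightarrow> 'q set \<Rightarrow> ('q \<Rightarrow> 'q \<Rightarrow> bool) \<Rightarrow> nat \<Rightarrow> nat \<Rightarrow> 'a \<Rightarrow> 'a \<Rightarrow> bool" where
  "symk P le Q leQ r 0 a b = (a = b)"
| "symk P le Q leQ r (Suc 0) a b = sym1 P le Q leQ r a b"
| "symk P le Q leQ r (Suc (Suc m)) a b =
     ((\<forall>j \<in> {..<Suc (Suc m)}. \<not> symk P le Q leQ r j a b) \<and>
      (\<exists>c\<in>P. \<exists>j \<in> {1..<Suc (Suc m)}.
          symk P le Q leQ r j a c \<and> symk P le Q leQ r (Suc (Suc m) - j) c b))"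
  by pat_completeness auto
termination
  by (relation "measure (\<lambda>(P, le, Q, leQ, r, n, a, b). n)") auto

text \<open>The 2-chain C_2 = {x < y}, realised as bool with False < True.\<close>
definition C2 :: "bool set" where "C2 = UNIV"
definition C2_le :: "bool \<Rightarrow> bool \<Rightarrow> bool" where "C2_le x y \<longleftrightarrow> x \<le> y"

end

theory Submission
  imports Defs
begin

(* An automorphism of a poset cannot swap two distinct comparable points. Hence a
   (C2,2)-generator sigma is an involution, and its support consists of the two 2-chains
   {a, a'} and {sigma a, sigma a'}. Conjugating a generator by an automorphism tau gives a
   generator whose family is the tau-image of the old one, so (C2,2,1)-symmetry is
   invariant under automorphisms.

   Now let a, c, b be points with c = sigma a and b = tau c coming from two (C2,2,1)-steps,
   and a ~= b. If tau fixes a, conjugating sigma by tau turns the first step into a step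
   from a to b; if sigma fixes b, conjugating tau by the inverse of sigma does. In the
   remaining case the support of tau forces a and b to be comparable, and then either
   sigma or the composite tau o sigma swaps two distinct comparable points. So two
   (C2,2,1)-steps between distinct points can always be replaced by one, whereas a
   (C2,2,n)-symmetric pair with n >= 2 would be joined by two such steps without being
   (C2,2,1)-symmetric. *)

abbreviation comparable :: "('a \<Rightarrow> 'a \<Rightarrow> bool) \<Rightarrow> 'a \<Rightarrow> 'a \<Rightarrow> bool" where
  "comparable le x y \<equiv> le x y \<or> le y x"

abbreviation conjugate :: "'a set \<Rightarrow> ('a \<Rightarrow> 'a) \<Rightarrow> ('a \<Rightarrow> 'a) \<Rightarrow> 'a \<Rightarrow> 'a" where
  "conjugate P \<tau> \<sigma> \<equiv> \<tau> \<circ> \<sigma> \<circ> inv_into P \<tau>"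

lemma is_aut_bij_betw: "is_aut P le \<sigma> \<Longrightarrow> bij_betw \<sigma> P P"
  by (simp add: is_aut_def)

lemma is_aut_inj_on: "is_aut P le \<sigma> \<Longrightarrow> inj_on \<sigma> P"
  by (simp add: is_aut_def bij_betw_def)

lemma is_aut_in: "is_aut P le \<sigma> \<Longrightarrow> x \<in> P \<Longrightarrow> \<sigma> x \<in> P"
  by (meson bij_betwE is_aut_def)

lemma is_aut_le_iff: "is_aut P le \<sigma> \<Longrightarrow> x \<in> P \<Longrightarrow> y \<in> P \<Longrightarrow> le (\<sigma> x) (\<sigma> y) \<longleftrightarrow> le x y"
  by (simp add: is_aut_def)

lemma is_aut_funpow_in: "is_aut P le \<sigma> \<Longrightarrow> x \<in> P \<Longrightarrow> (\<sigma> ^^ n) x \<in> P"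
  by (induction n) (simp_all add: is_aut_in)

lemma is_aut_comp: "is_aut P le \<sigma> \<Longrightarrow> is_aut P le \<tau> \<Longrightarrow> is_aut P le (\<tau> \<circ> \<sigma>)"
  by (auto simp: is_aut_def intro: bij_betw_trans dest: bij_betwE)

lemma is_aut_inv_into:
  assumes "is_aut P le \<tau>"
  shows "is_aut P le (inv_into P \<tau>)"
proof -
  have bij: "bij_betw \<tau> P P" using assms by (rule is_aut_bij_betw)
  have "le (inv_into P \<tau> x) (inv_into P \<tau> y) \<longleftrightarrow> le x y" if "x \<in> P" "y \<in> P" for x y
    using is_aut_le_iff[OF assms, of "inv_into P \<tau> x" "inv_into P \<tau> y"] that bij
    by (simp add: bij_betw_inv_into_right inv_into_into bij_betw_imp_surj_on)
  then show ?thesis using bij_betw_inv_into[OF bij] by (simp add: is_aut_def)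
qed

lemma aut_swap_comparable_eq:
  assumes "poset P le" "is_aut P le \<sigma>" "x \<in> P" "y \<in> P"
    and "\<sigma> x = y" "\<sigma> y = x" "comparable le x y"
  shows "x = y"
  using assms is_aut_le_iff[OF assms(2,3,4)] is_aut_le_iff[OF assms(2,4,3)]
  unfolding poset_def by metis

lemma n_ordered_aut_image:
  assumes "is_aut P le \<tau>" "A \<subseteq> P"
  shows "n_ordered le (\<tau> ` A) = n_ordered le A"
proof -
  have inj: "inj_on \<tau> A" using is_aut_inj_on[OF assms(1)] assms(2) by (rule inj_on_subset)
  have "{(x, y). x \<in> \<tau> ` A \<and> y \<in> \<tau> ` A \<and> strict le x y} =
        map_prod \<tau> \<tau> ` {(x, y). x \<in> A \<and> y \<in> A \<and> strict le x y}"
    using assms inj by (auto simp: strict_def is_aut_le_iff subset_iff inj_on_eq_iff)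
  moreover have "inj_on (map_prod \<tau> \<tau>) {(x, y). x \<in> A \<and> y \<in> A \<and> strict le x y}"
    using inj by (auto simp: inj_on_def)
  ultimately show ?thesis unfolding n_ordered_def by (simp add: card_image)
qed

lemma is_chain_aut_image:
  assumes "is_aut P le \<tau>" "C \<subseteq> P"
  shows "is_chain le (\<tau> ` C) \<longleftrightarrow> is_chain le C"
  using assms unfolding is_chain_def by (auto simp: is_aut_le_iff subset_iff)

lemma chain_len_aut_image:
  assumes "is_aut P le \<tau>" "A \<subseteq> P"
  shows "chain_len le (\<tau> ` A) = chain_len le A"
proof -
  have "card (\<tau> ` C) = card C" if "C \<subseteq> A" for C
    using is_aut_inj_on[OF assms(1)] that assms(2) by (meson card_image inj_on_subset order_trans)
  moreover have "is_chain le (\<tau> ` C) \<longleftrightarrow> is_chain le C" if "C \<subseteq> A" for C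
    using is_chain_aut_image[OF assms(1)] that assms(2) by blast
  ultimately have "{card C | C. C \<subseteq> \<tau> ` A \<and> is_chain le C} = {card C | C. C \<subseteq> A \<and> is_chain le C}"
    by (auto simp: subset_image_iff) metis+
  then show ?thesis unfolding chain_len_def by simp
qed

lemma order_iso_aut_image:
  assumes "is_aut P le \<tau>" "A \<subseteq> P" "order_iso A le Q leQ"
  shows "order_iso (\<tau> ` A) le Q leQ"
proof -
  obtain f where f: "bij_betw f A Q" "\<forall>a\<in>A. \<forall>b\<in>A. le a b \<longleftrightarrow> leQ (f a) (f b)"
    using assms(3) unfolding order_iso_def by blast
  have inj: "inj_on \<tau> A" using is_aut_inj_on[OF assms(1)] assms(2) by (rule inj_on_subset)
  have "bij_betw (f \<circ> inv_into A \<tau>) (\<tau> ` A) Q"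
    using bij_betw_trans[OF bij_betw_inv_into[OF inj_on_imp_bij_betw[OF inj]] f(1)] .
  moreover have "le x y \<longleftrightarrow> leQ (f (inv_into A \<tau> x)) (f (inv_into A \<tau> y))"
    if "x \<in> \<tau> ` A" "y \<in> \<tau> ` A" for x y
    using that f(2) inj assms(2) by (auto simp: is_aut_le_iff[OF assms(1)] subset_iff)
  ultimately show ?thesis unfolding order_iso_def by auto
qed

lemma max_ordered_aut_image_iff:
  assumes "is_aut P le \<tau>" "X \<subseteq> P" "A \<subseteq> P"
  shows "max_ordered le (\<tau> ` X) (\<tau> ` A) \<longleftrightarrow> max_ordered le X A"
proof -
  have inj: "inj_on \<tau> P" using assms(1) by (rule is_aut_inj_on)
  have card: "card (\<tau> ` B) = card B" if "B \<subseteq> P" for B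
    using inj that by (meson card_image inj_on_subset)
  have "\<tau> ` A \<subseteq> \<tau> ` X \<longleftrightarrow> A \<subseteq> X"
    using inj_on_image_mem_iff[OF inj _ assms(2)] assms(3) by blast
  moreover have "(\<forall>B. B \<subseteq> \<tau> ` X \<and> card B = card (\<tau> ` A) \<longrightarrow> n_ordered le B \<le> n_ordered le (\<tau> ` A))
      \<longleftrightarrow> (\<forall>B. B \<subseteq> X \<and> card B = card A \<longrightarrow> n_ordered le B \<le> n_ordered le A)"
    using all_subset_image[of \<tau> X "\<lambda>B. card B = card (\<tau> ` A) \<longrightarrow> n_ordered le B \<le> n_ordered le (\<tau> ` A)"]
      assms card n_ordered_aut_image[OF assms(1)] by (auto dest: order_trans)
  ultimately show ?thesis unfolding max_ordered_def by blast
qed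

lemma all_max_ordered_aut_image_iff:
  assumes "is_aut P le \<tau>" "X \<subseteq> P"
  shows "(\<forall>T. max_ordered le (\<tau> ` X) T \<longrightarrow> \<Phi> T) \<longleftrightarrow> (\<forall>T. max_ordered le X T \<longrightarrow> \<Phi> (\<tau> ` T))"
proof -
  have "(\<forall>T. max_ordered le (\<tau> ` X) T \<longrightarrow> \<Phi> T) \<longleftrightarrow>
        (\<forall>T. T \<subseteq> \<tau> ` X \<longrightarrow> max_ordered le (\<tau> ` X) T \<longrightarrow> \<Phi> T)"
    by (auto simp: max_ordered_def)
  also have "\<dots> \<longleftrightarrow> (\<forall>T. T \<subseteq> X \<longrightarrow> max_ordered le (\<tau> ` X) (\<tau> ` T) \<longrightarrow> \<Phi> (\<tau> ` T))"
    by (rule all_subset_image)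
  also have "\<dots> \<longleftrightarrow> (\<forall>T. max_ordered le X T \<longrightarrow> \<Phi> (\<tau> ` T))"
    using max_ordered_aut_image_iff[OF assms] assms(2) by (auto simp: max_ordered_def)
  finally show ?thesis .
qed

lemma smallest_max_ordered_aut_image_iff:
  assumes \<tau>: "is_aut P le \<tau>" and XP: "X \<subseteq> P" and "A \<subseteq> P"
  shows "(\<forall>T. max_ordered le (\<tau> ` X) T \<longrightarrow> chain_len le T = chain_len le (\<tau> ` X)
             \<longrightarrow> card (\<tau> ` A) \<le> card T) \<longleftrightarrow>
         (\<forall>T. max_ordered le X T \<longrightarrow> chain_len le T = chain_len le X \<longrightarrow> card A \<le> card T)"
proof -
  have "card (\<tau> ` B) = card B" if "B \<subseteq> P" for B
    using is_aut_inj_on[OF \<tau>] that by (meson card_image inj_on_subset)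
  then show ?thesis
    unfolding all_max_ordered_aut_image_iff[OF \<tau> XP]
    using assms chain_len_aut_image[OF \<tau>] by (auto simp: max_ordered_def dest: order_trans)
qed

lemma conjugate_apply:
  assumes "is_aut P le \<tau>" "x \<in> P"
  shows "conjugate P \<tau> \<sigma> (\<tau> x) = \<tau> (\<sigma> x)"
  using assms by (simp add: is_aut_inj_on)

lemma conjugate_funpow:
  assumes "is_aut P le \<tau>" "is_aut P le \<sigma>" "x \<in> P"
  shows "(conjugate P \<tau> \<sigma> ^^ q) (\<tau> x) = \<tau> ((\<sigma> ^^ q) x)"
  using is_aut_funpow_in[OF assms(2,3)] is_aut_inj_on[OF assms(1)] by (induction q) simp_all

lemma supp_subset: "supp P \<sigma> \<subseteq> P"
  by (auto simp: supp_def)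

lemma supp_conjugate:
  assumes \<tau>: "is_aut P le \<tau>" and \<sigma>: "is_aut P le \<sigma>"
  shows "supp P (conjugate P \<tau> \<sigma>) = \<tau> ` supp P \<sigma>"
proof -
  have moved: "\<tau> (\<sigma> y) \<noteq> \<tau> y \<longleftrightarrow> \<sigma> y \<noteq> y" if "y \<in> P" for y
    using that is_aut_inj_on[OF \<tau>] is_aut_in[OF \<sigma>] by (auto simp: inj_on_eq_iff)
  have surj: "P = \<tau> ` P" using is_aut_bij_betw[OF \<tau>] by (simp add: bij_betw_def)
  show ?thesis
  proof (intro set_eqI iffI)
    fix x assume x: "x \<in> supp P (conjugate P \<tau> \<sigma>)"
    then obtain y where "y \<in> P" "x = \<tau> y" using surj by (auto simp: supp_def)
    then show "x \<in> \<tau> ` supp P \<sigma>"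
      using x moved conjugate_apply[OF \<tau>] by (auto simp: supp_def simp del: comp_apply)
  next
    fix x assume "x \<in> \<tau> ` supp P \<sigma>"
    then obtain y where "y \<in> P" "x = \<tau> y" "\<sigma> y \<noteq> y" by (auto simp: supp_def)
    then show "x \<in> supp P (conjugate P \<tau> \<sigma>)"
      using moved conjugate_apply[OF \<tau>] is_aut_in[OF \<tau>] by (auto simp: supp_def simp del: comp_apply)
  qed
qed

lemma generator_family_is_aut: "generator_family P le Q leQ r \<sigma> S \<Longrightarrow> is_aut P le \<sigma>"
  by (simp add: generator_family_def)

lemma generator_family_subset_supp:
  "generator_family P le Q leQ r \<sigma> S \<Longrightarrow> i < r \<Longrightarrow> S i \<subseteq> supp P \<sigma>"
  by (simp add: generator_family_def)

lemma generator_family_subset: "generator_family P le Q leQ r \<sigma> S \<Longrightarrow> i < r \<Longrightarrow> S i \<subseteq> P"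
  using generator_family_subset_supp supp_subset by (rule order_trans)

lemma generator_family_Union:
  "generator_family P le Q leQ r \<sigma> S \<Longrightarrow> (\<Union>i<r. S i) = supp P \<sigma>"
  by (simp add: generator_family_def)

lemma generator_family_conjugate:
  assumes gen: "generator_family P le Q leQ r \<sigma> S" and \<tau>: "is_aut P le \<tau>"
  shows "generator_family P le Q leQ r (conjugate P \<tau> \<sigma>) (\<lambda>i. \<tau> ` S i)"
proof -
  let ?\<rho> = "conjugate P \<tau> \<sigma>" and ?X = "supp P \<sigma>"
  have \<sigma>: "is_aut P le \<sigma>" using gen by (rule generator_family_is_aut)
  have XP: "?X \<subseteq> P" by (rule supp_subset)
  have supp_\<rho>: "supp P ?\<rho> = \<tau> ` ?X" using \<tau> \<sigma> by (rule supp_conjugate)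
  show ?thesis
    unfolding generator_family_def
  proof (intro conjI allI impI)
    show "is_aut P le ?\<rho>" using \<sigma> \<tau> is_aut_inv_into[OF \<tau>] by (simp add: is_aut_comp)
  next
    fix i assume "i < r"
    then have Si: "S i \<subseteq> ?X" "order_iso (S i) le Q leQ" "max_ordered le ?X (S i)"
      "chain_len le (S i) = chain_len le ?X"
      "\<forall>T. max_ordered le ?X T \<and> chain_len le T = chain_len le ?X \<longrightarrow> card (S i) \<le> card T"
      "\<sigma> ` S i = S ((i + 1) mod r)"
      using gen by (simp_all add: generator_family_def)
    have SiP: "S i \<subseteq> P" using Si(1) XP by blast
    show "\<tau> ` S i \<subseteq> supp P ?\<rho>" using Si(1) supp_\<rho> by auto
    show "order_iso (\<tau> ` S i) le Q leQ" using \<tau> SiP Si(2) by (rule order_iso_aut_image)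
    show "max_ordered le (supp P ?\<rho>) (\<tau> ` S i)"
      using Si(3) max_ordered_aut_image_iff[OF \<tau> XP SiP] supp_\<rho> by simp
    show "chain_len le (\<tau> ` S i) = chain_len le (supp P ?\<rho>)"
      using Si(4) chain_len_aut_image[OF \<tau>] SiP XP supp_\<rho> by simp
    show "card (\<tau> ` S i) \<le> card T"
      if "max_ordered le (supp P ?\<rho>) T \<and> chain_len le T = chain_len le (supp P ?\<rho>)" for T
      using that Si(5) smallest_max_ordered_aut_image_iff[OF \<tau> XP SiP] supp_\<rho> by simp
    have "?\<rho> ` \<tau> ` S i = \<tau> ` \<sigma> ` S i"
      unfolding image_image using SiP conjugate_apply[OF \<tau>] by (intro image_cong) auto
    then show "?\<rho> ` \<tau> ` S i = \<tau> ` S ((i + 1) mod r)" using Si(6) by simp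
  next
    show "(\<Union>i<r. \<tau> ` S i) = supp P ?\<rho>"
      using generator_family_Union[OF gen] supp_\<rho> by (simp flip: image_UN)
  qed
qed

lemma sym1I:
  assumes "generator_family P le Q leQ r \<sigma> S" "i < r" "j < r" "S i \<noteq> S j" "a \<in> S i"
    "1 \<le> q" "q < r" "b = (\<sigma> ^^ q) a" "b \<in> S j"
  shows "sym1 P le Q leQ r a b"
  unfolding sym1_def using assms by blast

lemma sym1_aut_image:
  assumes "sym1 P le Q leQ r a b" and \<tau>: "is_aut P le \<tau>"
  shows "sym1 P le Q leQ r (\<tau> a) (\<tau> b)"
proof -
  obtain \<sigma> S i j q where gen: "generator_family P le Q leQ r \<sigma> S"
    and ij: "i < r" "j < r" "S i \<noteq> S j" and a: "a \<in> S i"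
    and q: "1 \<le> q" "q < r" and b: "b = (\<sigma> ^^ q) a" "b \<in> S j"
    using assms(1) unfolding sym1_def by (elim exE conjE) blast
  have SP: "S k \<subseteq> P" if "k < r" for k
    using gen that by (rule generator_family_subset)
  have "\<tau> ` S i \<noteq> \<tau> ` S j"
    using ij SP inj_on_image_eq_iff[OF is_aut_inj_on[OF \<tau>]] by simp
  moreover have "\<tau> b = (conjugate P \<tau> \<sigma> ^^ q) (\<tau> a)"
    using conjugate_funpow[OF \<tau> generator_family_is_aut[OF gen]] a SP[OF ij(1)] b(1)
    by (simp add: subset_iff)
  ultimately show ?thesis
    using sym1I[OF generator_family_conjugate[OF gen \<tau>] ij(1,2) _ imageI[OF a] q _ imageI[OF b(2)]]
    by blast
qed

lemma sym1_2E:
  assumes "sym1 P le Q leQ 2 a b"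
  obtains \<sigma> S i where "generator_family P le Q leQ 2 \<sigma> S" "i < 2" "a \<in> S i" "b = \<sigma> a"
proof -
  obtain \<sigma> S i j q where "generator_family P le Q leQ 2 \<sigma> S" "i < 2" "a \<in> S i"
    and q: "1 \<le> q" "q < 2" "b = (\<sigma> ^^ q) a"
    using assms unfolding sym1_def by (elim exE conjE) blast
  moreover have "q = 1" using q(1,2) by simp
  ultimately show thesis using that q(3) by simp
qed

lemma order_iso_C2E:
  assumes "order_iso A le C2 C2_le" "a \<in> A"
  obtains a' where "A = {a, a'}" "a' \<noteq> a" "comparable le a a'"
proof -
  obtain f where f: "bij_betw f A C2" "\<forall>x\<in>A. \<forall>y\<in>A. le x y \<longleftrightarrow> C2_le (f x) (f y)"
    using assms(1) unfolding order_iso_def by blast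
  have "card A = 2" using bij_betw_same_card[OF f(1)] by (simp add: C2_def)
  then obtain a' where A: "A = {a, a'}" "a' \<noteq> a"
    using assms(2) by (metis card_2_iff doubleton_eq_iff insertE singletonD)
  then have "comparable le a a'" using f(2) by (auto simp: C2_le_def)
  with A show thesis by (rule that)
qed

lemma C2_generator_support:
  assumes po: "poset P le" and gen: "generator_family P le C2 C2_le 2 \<sigma> S"
    and i: "i < 2" and a: "a \<in> S i"
  obtains a' where "a' \<noteq> a" "comparable le a a'" "\<sigma> (\<sigma> a) = a" "supp P \<sigma> = {a, a', \<sigma> a, \<sigma> a'}"
proof -
  define j where "j = (i + 1) mod 2"
  have j: "j < 2" "(j + 1) mod 2 = i" "{..<2} = {i, j}"
    using i unfolding j_def by (fastforce simp: less_2_cases_iff)+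
  have \<sigma>\<sigma>: "is_aut P le (\<sigma> \<circ> \<sigma>)"
    using generator_family_is_aut[OF gen] generator_family_is_aut[OF gen] by (rule is_aut_comp)
  have Si: "order_iso (S i) le C2 C2_le" "\<sigma> ` S i = S j" "\<sigma> ` S j = S i"
    using gen i j(1,2) unfolding generator_family_def j_def by simp_all
  obtain a' where a': "S i = {a, a'}" "a' \<noteq> a" "comparable le a a'"
    using order_iso_C2E[OF Si(1) a] .
  have P: "a \<in> P" "a' \<in> P" using generator_family_subset[OF gen i] a'(1) by auto
  have "\<sigma> ` \<sigma> ` S i = S i" using Si(2,3) by simp
  then have "{\<sigma> (\<sigma> a), \<sigma> (\<sigma> a')} = {a, a'}" using a'(1) by simp
  moreover have "\<sigma> (\<sigma> a) \<noteq> \<sigma> (\<sigma> a')"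
    using inj_on_contraD[OF is_aut_inj_on[OF \<sigma>\<sigma>] a'(2)[symmetric] P] by simp
  moreover have "\<not> (\<sigma> (\<sigma> a) = a' \<and> \<sigma> (\<sigma> a') = a)"
    using aut_swap_comparable_eq[OF po \<sigma>\<sigma> P] a'(2,3) by auto
  ultimately have "\<sigma> (\<sigma> a) = a" by (auto simp: doubleton_eq_iff)
  moreover have "supp P \<sigma> = S i \<union> S j" using generator_family_Union[OF gen] j(3) by simp
  then have "supp P \<sigma> = {a, a', \<sigma> a, \<sigma> a'}" using Si(2) a'(1) by auto
  ultimately show thesis using a' that by blast
qed

lemma C2_generator_involution:
  assumes po: "poset P le" and gen: "generator_family P le C2 C2_le 2 \<sigma> S" and "x \<in> P"
  shows "\<sigma> (\<sigma> x) = x"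
proof (cases "x \<in> supp P \<sigma>")
  case True
  then obtain i where "i < 2" "x \<in> S i" using generator_family_Union[OF gen] by auto
  then show ?thesis using C2_generator_support[OF po gen] by metis
next
  case False
  then show ?thesis using \<open>x \<in> P\<close> by (simp add: supp_def)
qed

lemma C2_generator_incomparable_point:
  assumes po: "poset P le" and gen: "generator_family P le C2 C2_le 2 \<tau> T" "k < 2" "c \<in> T k"
    and x: "x \<in> supp P \<tau>" "x \<noteq> c" "x \<noteq> \<tau> c" "\<not> comparable le c x"
  shows "supp P \<tau> = {c, \<tau> c, x, \<tau> x}" "comparable le c (\<tau> x)"
proof -
  obtain c' where c': "comparable le c c'" and supp_\<tau>: "supp P \<tau> = {c, c', \<tau> c, \<tau> c'}"
    using C2_generator_support[OF po gen] by metis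
  have "c' \<in> P" using supp_subset[of P \<tau>] unfolding supp_\<tau> by auto
  have "x = \<tau> c'" using x c' unfolding supp_\<tau> by auto
  moreover have "\<tau> (\<tau> c') = c'" using C2_generator_involution[OF po gen(1) \<open>c' \<in> P\<close>] .
  ultimately show "supp P \<tau> = {c, \<tau> c, x, \<tau> x}" "comparable le c (\<tau> x)"
    using supp_\<tau> c' by auto
qed

lemma C2_generators_fix_endpoint:
  assumes po: "poset P le"
    and gen_\<sigma>: "generator_family P le C2 C2_le 2 \<sigma> S" "i < 2" "a \<in> S i"
    and gen_\<tau>: "generator_family P le C2 C2_le 2 \<tau> T" "k < 2" "\<sigma> a \<in> T k"
    and ne: "\<tau> (\<sigma> a) \<noteq> a"
  shows "\<tau> a = a \<or> \<sigma> (\<tau> (\<sigma> a)) = \<tau> (\<sigma> a)"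
proof (rule ccontr)
  define c b e where "c = \<sigma> a" and "b = \<tau> c" and "e = \<sigma> b"
  assume "\<not> (\<tau> a = a \<or> \<sigma> (\<tau> (\<sigma> a)) = \<tau> (\<sigma> a))"
  then have moved: "\<tau> a \<noteq> a" "e \<noteq> b" unfolding b_def c_def e_def by auto
  have \<sigma>: "is_aut P le \<sigma>" and \<tau>: "is_aut P le \<tau>" and \<rho>: "is_aut P le (\<tau> \<circ> \<sigma>)"
    using gen_\<sigma>(1) gen_\<tau>(1) by (simp_all add: generator_family_is_aut is_aut_comp)
  have "a \<in> supp P \<sigma>" "c \<in> supp P \<tau>"
    using generator_family_subset_supp[OF gen_\<sigma>(1,2)] generator_family_subset_supp[OF gen_\<tau>(1,2)]
      gen_\<sigma>(3) gen_\<tau>(3) unfolding c_def by auto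
  then have "a \<in> P" "a \<noteq> c" "c \<in> P" "b \<noteq> c" unfolding supp_def c_def b_def by auto
  then have in_P: "a \<in> P" "c \<in> P" "b \<in> P" "e \<in> P" "\<tau> a \<in> P"
    unfolding b_def e_def using is_aut_in[OF \<sigma>] is_aut_in[OF \<tau>] by auto
  have invol: "\<sigma> c = a" "\<sigma> e = b" "\<tau> (\<tau> a) = a"
    using C2_generator_involution[OF po gen_\<sigma>(1)] C2_generator_involution[OF po gen_\<tau>(1)] in_P
    unfolding c_def e_def by auto
  have "\<not> comparable le c a"
    using aut_swap_comparable_eq[OF po \<sigma> in_P(1,2)] invol(1) \<open>a \<noteq> c\<close> unfolding c_def by auto
  moreover have "a \<in> supp P \<tau>" using moved(1) in_P(1) unfolding supp_def by simp
  ultimately have supp_\<tau>: "supp P \<tau> = {c, b, a, \<tau> a}" and "comparable le c (\<tau> a)"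
    using C2_generator_incomparable_point[OF po gen_\<tau>] \<open>a \<noteq> c\<close> ne unfolding b_def c_def by auto
  then have "comparable le b a"
    using is_aut_le_iff[OF \<tau> in_P(2,5)] is_aut_le_iff[OF \<tau> in_P(5,2)] invol(3) unfolding b_def by auto
  have \<rho>_a: "(\<tau> \<circ> \<sigma>) a = b" unfolding b_def c_def by simp
  show False
  proof (cases "\<tau> e = e")
    case True
    then have "(\<tau> \<circ> \<sigma>) b = e" unfolding e_def by simp
    then have "comparable le b e"
      using \<open>comparable le b a\<close> is_aut_le_iff[OF \<rho> in_P(1,3)] is_aut_le_iff[OF \<rho> in_P(3,1)]
      unfolding \<rho>_a by auto
    then have "b = e" using aut_swap_comparable_eq[OF po \<sigma> in_P(3,4)] invol(2) e_def[symmetric] by blast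
    with moved(2) show False by simp
  next
    case False
    then have "e \<in> supp P \<tau>" using in_P(4) unfolding supp_def by simp
    moreover have "e \<noteq> c" "e \<noteq> a" using invol \<open>b \<noteq> c\<close> ne unfolding b_def c_def e_def by auto
    ultimately have "e = \<tau> a" using moved(2) unfolding supp_\<tau> by auto
    then have "(\<tau> \<circ> \<sigma>) b = a" using invol(3) unfolding e_def by simp
    then have "a = b"
      using aut_swap_comparable_eq[OF po \<rho> in_P(1,3) \<rho>_a] \<open>comparable le b a\<close> by blast
    with ne show False unfolding b_def c_def by simp
  qed
qed

lemma sym1_C2_trans:
  assumes po: "poset P le"
    and ac: "sym1 P le C2 C2_le 2 a c" and cb: "sym1 P le C2 C2_le 2 c b" and "a \<noteq> b"
  shows "sym1 P le C2 C2_le 2 a b"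
proof -
  obtain \<sigma> S i where \<sigma>: "generator_family P le C2 C2_le 2 \<sigma> S" "i < 2" "a \<in> S i" and c: "c = \<sigma> a"
    using sym1_2E[OF ac] .
  obtain \<tau> T k where \<tau>: "generator_family P le C2 C2_le 2 \<tau> T" "k < 2" "c \<in> T k" and b: "b = \<tau> c"
    using sym1_2E[OF cb] .
  have "\<tau> a = a \<or> \<sigma> b = b"
    using C2_generators_fix_endpoint[OF po \<sigma> \<tau>(1,2)] \<tau>(3) \<open>a \<noteq> b\<close> unfolding b c by auto
  then show ?thesis
  proof
    assume "\<tau> a = a"
    then show ?thesis using sym1_aut_image[OF ac generator_family_is_aut[OF \<tau>(1)]] b by simp
  next
    assume "\<sigma> b = b"
    have "a \<in> P" "b \<in> P"
      using generator_family_subset[OF \<sigma>(1,2)] \<sigma>(3) generator_family_subset[OF \<tau>(1,2)] \<tau>(3)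
        is_aut_in[OF generator_family_is_aut[OF \<tau>(1)]] b by auto
    then have "inv_into P \<sigma> c = a" "inv_into P \<sigma> b = b"
      using is_aut_inj_on[OF generator_family_is_aut[OF \<sigma>(1)]] \<open>\<sigma> b = b\<close> c
      by (metis inv_into_f_f)+
    then show ?thesis
      using sym1_aut_image[OF cb is_aut_inv_into[OF generator_family_is_aut[OF \<sigma>(1)]]] by simp
  qed
qed

lemma symk_less_2:
  assumes sym1_trans: "\<And>a c b. sym1 P le Q leQ r a c \<Longrightarrow> sym1 P le Q leQ r c b \<Longrightarrow> a \<noteq> b
      \<Longrightarrow> sym1 P le Q leQ r a b"
  shows "symk P le Q leQ r k a b \<Longrightarrow> k < 2"
proof (induction k arbitrary: a b rule: less_induct)
  case (less k)
  show ?case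
  proof (rule ccontr)
    assume "\<not> k < 2"
    then have k: "k = Suc (Suc (k - 2))" by simp
    obtain c j where not_sym01: "\<forall>j<k. \<not> symk P le Q leQ r j a b"
      and j: "1 \<le> j" "j < k" and ac: "symk P le Q leQ r j a c" and cb: "symk P le Q leQ r (k - j) c b"
      using less.prems by (subst (asm) k, subst (asm) symk.simps) (auto simp flip: k)
    have "j = 1" "k - j = 1" using less.IH[OF _ ac] less.IH[OF _ cb] j by auto
    then have "sym1 P le Q leQ r a c" "sym1 P le Q leQ r c b" using ac cb by simp_all
    moreover have "a \<noteq> b" "\<not> sym1 P le Q leQ r a b"
      using not_sym01[rule_format, of 0] not_sym01[rule_format, of "Suc 0"] j by auto
    ultimately show False using sym1_trans by blast
  qed
qed

theorem mainTheorem4: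
  fixes P :: "'a set" and le :: "'a \<Rightarrow> 'a \<Rightarrow> bool" and a b :: 'a and k :: nat
  assumes "finite P" and "poset P le" and "a \<in> P" and "b \<in> P"
    and "symk P le C2 C2_le 2 k a b"
  shows "k \<in> {0, 1}"
proof -
  have "k < 2" using symk_less_2[OF sym1_C2_trans[OF assms(2)] assms(5)] .
  then show ?thesis by auto
qed

end
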